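(* The ai-semiring $\mathcal{B}_2^1$ divides the direct square $\mathcal{A}_2^1\times\mathcal{A}_2^1$, i.e., $\mathcal{B}_2^1$ is a homomorphic image of a subsemiring of $\mathcal{A}_2^1\times\mathcal{A}_2^1$.
   Context: An ai-semiring is a structure $(R,+,\cdot)$ with $(R,+)$ a semilattice, $(R,\cdot)$ a semigroup, and multiplication distributing over addition on both sides; in a semilattice, $s\le t$ iff $s+t=t$, and $s+t$ is the supremum of $s,t$ in this order. $\mathcal{A}_2^1$: Let $A_2=\langle e,a\mid eae=e^2=e,\ aea=a,\ a^2=0\rangle=\{e,a,ae,ea,0\}$ and let $A_2^1$ be $A_2$ with an identity element $1$ adjoined. Represent $A_2^1$ by order-preserving maps of the chain $0<1<2$ fixing $2$ (maps act on the right, composition $x(\alpha\beta)=(x\alpha)\beta$): $1\mapsto$ identity; $ea\mapsto(0\mapsto1,1\mapsto1,2\mapsto2)$; $ae\mapsto(0\mapsto0,1\mapsto2,2\mapsto2)$; $a\mapsto(0\mapsto1,1\mapsto2,2\mapsto2)$; $e\mapsto(0\mapsto0,1\mapsto0,2\mapsto2)$; $0\mapsto$ the constant map to $2$. The set of these maps is closed under pointwise maximum, and $\mathcal{A}_2^1=(A_2^1,+,\cdot)$ has addition given by pointwise maximum; equivalently its semilattice order is $e<1<ea$, $1<ae$, $ea<a$, $ae<a$, $a<0$ (with $ea,ae$ incomparable). $\mathcal{B}_2^1$: Let $B_2=\langle c,d\mid cdc=c,\ dcd=d,\ c^2=d^2=0\rangle=\{c,d,cd,dc,0\}$ and $B_2^1$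 be $B_2$ with identity $1$ adjoined. $\mathcal{B}_2^1=(B_2^1,+,\cdot)$ where addition is the join in the order: $0$ is the top, $c,d,cd,dc$ lie directly below $0$, and $1$ lies below $cd$ and $dc$ only (so e.g. $1+cd=cd$, $c+d=0$, $1+c=0$, $cd+dc=0$). *)

theory Defs
  imports Main
begin

datatype A21 = A1 | Ae | Aa | Aea | Aae | A0

text \<open>Representation by order-preserving maps of the chain 0<1<2 fixing 2,
  given as the triple of images (0 alpha, 1 alpha, 2 alpha).\<close>
fun repA :: "A21 \<Rightarrow> nat \<times> nat \<times> nat" where
  "repA A1  = (0, 1, 2)"
| "repA Aea = (1, 1, 2)"
| "repA Aae = (0, 2, 2)"
| "repA Aa  = (1, 2, 2)"
| "repA Ae  = (0, 0, 2)"
| "repA A0  = (2, 2, 2)"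

definition appT :: "nat \<times> nat \<times> nat \<Rightarrow> nat \<Rightarrow> nat" where
  "appT t x = (if x = 0 then fst t else if x = 1 then fst (snd t) else snd (snd t))"

definition compT :: "nat \<times> nat \<times> nat \<Rightarrow> nat \<times> nat \<times> nat \<Rightarrow> nat \<times> nat \<times> nat" where
  "compT s t = (appT t (appT s 0), appT t (appT s 1), appT t (appT s 2))"

definition maxT :: "nat \<times> nat \<times> nat \<Rightarrow> nat \<times> nat \<times> nat \<Rightarrow> nat \<times> nat \<times> nat" where
  "maxT s t = (max (appT s 0) (appT t 0), max (appT s 1) (appT t 1), max (appT s 2) (appT t 2))"

definition multA :: "A21 \<Rightarrow> A21 \<Rightarrow> A21" where
  "multA x y = (THE z. repA z = compT (repA x) (repA y))"

definition addA :: "A21 \<Rightarrow> A21 \<Rightarrow> A21" where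
  "addA x y = (THE z. repA z = maxT (repA x) (repA y))"

datatype B21 = B1 | Bc | Bd | Bcd | Bdc | B0

text \<open>B_2 is the Brandt semigroup of 2x2 matrix units with zero:
  c = E12, d = E21, cd = E11, dc = E22.\<close>
fun unitB :: "B21 \<Rightarrow> (nat \<times> nat) option" where
  "unitB Bc = Some (1, 2)"
| "unitB Bd = Some (2, 1)"
| "unitB Bcd = Some (1, 1)"
| "unitB Bdc = Some (2, 2)"
| "unitB _ = None"

definition multB :: "B21 \<Rightarrow> B21 \<Rightarrow> B21" where
  "multB x y =
     (if x = B1 then y else if y = B1 then x
      else if x = B0 \<or> y = B0 then B0
      else (case (unitB x, unitB y) of
              (Some (i, j), Some (k, l)) \<Rightarrow>
                 (if j = k then (THE z. unitB z = Some (i, l)) else B0)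
            | _ \<Rightarrow> B0))"

text \<open>Join in the order: 0 top; c, d, cd, dc directly below 0; 1 below cd and dc only.\<close>
definition addB :: "B21 \<Rightarrow> B21 \<Rightarrow> B21" where
  "addB x y =
     (if x = y then x
      else if {x, y} = {B1, Bcd} then Bcd
      else if {x, y} = {B1, Bdc} then Bdc
      else B0)"

definition addAA :: "A21 \<times> A21 \<Rightarrow> A21 \<times> A21 \<Rightarrow> A21 \<times> A21" where
  "addAA p q = (addA (fst p) (fst q), addA (snd p) (snd q))"

definition multAA :: "A21 \<times> A21 \<Rightarrow> A21 \<times> A21 \<Rightarrow> A21 \<times> A21" where
  "multAA p q = (multA (fst p) (fst q), multA (snd p) (snd q))"

end

theory Submission
  imports Defs
begin

(* Inside A_2^1 x A_2^1 put c = (a, e) and d = (e, a). Since aea = a and eae = e we get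
   cdc = c and dcd = d, and together with 1 = (1, 1) these give the matrix units
   cd = (ae, ea) and dc = (ea, ae). Adding 18 further pairs yields a subsemiring S in which
   those 18 pairs form a set I absorbing under both addition and multiplication. Collapsing
   I to one point (a Rees quotient) gives B_2^1: the collapsed class is the zero, which is
   also the top of the order. What remains is a finite check in the Cayley tables. *)

lemma hom_on_Un_absorbing:
  assumes absorbing: "\<And>p q. p \<in> T \<union> I \<Longrightarrow> q \<in> T \<union> I \<Longrightarrow> p \<in> I \<or> q \<in> I \<Longrightarrow> f p q \<in> I"
    and zero: "\<And>b. g z b = z" "\<And>b. g b z = z"
    and collapse: "\<And>p. p \<in> I \<Longrightarrow> h p = z"
    and hom: "\<And>p q. p \<in> T \<Longrightarrow> q \<in> T \<Longrightarrow> h (f p q) = g (h p) (h q)"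
    and "p \<in> T \<union> I" "q \<in> T \<union> I"
  shows "h (f p q) = g (h p) (h q)"
proof (cases "p \<in> I \<or> q \<in> I")
  case True
  then have "h (f p q) = z" and "h p = z \<or> h q = z"
    using absorbing[OF \<open>p \<in> T \<union> I\<close> \<open>q \<in> T \<union> I\<close>] collapse by auto
  then show ?thesis using zero by auto
next
  case False
  then show ?thesis using hom \<open>p \<in> T \<union> I\<close> \<open>q \<in> T \<union> I\<close> by blast
qed

lemma repA_inj: "repA z = repA w \<Longrightarrow> z = w"
  by (cases z; cases w; simp)

lemma the_repA_eq:
  assumes "repA w = t"
  shows "(THE z. repA z = t) = w"
proof (rule the_equality)
  show "repA z = t \<Longrightarrow> z = w" for z
    using assms by (intro repA_inj) simp_all
qed (fact assms)

(* Stated with the numeral 1, so every evaluation below runs with One_nat_def removed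
   from the simpset; it would otherwise rewrite 1 to Suc 0 and these rules would not fire. *)
lemma the_repA_simps:
  "(THE z. repA z = (0, 1, 2)) = A1"
  "(THE z. repA z = (1, 1, 2)) = Aea"
  "(THE z. repA z = (0, 2, 2)) = Aae"
  "(THE z. repA z = (1, 2, 2)) = Aa"
  "(THE z. repA z = (0, 0, 2)) = Ae"
  "(THE z. repA z = (2, 2, 2)) = A0"
  by (rule the_repA_eq, simp del: One_nat_def)+

lemma unitB_inj: "unitB z = unitB w \<Longrightarrow> unitB w \<noteq> None \<Longrightarrow> z = w"
  by (cases z; cases w; simp)

lemma the_unitB_eq:
  assumes "unitB w = Some v"
  shows "(THE z. unitB z = Some v) = w"
proof (rule the_equality)
  show "unitB z = Some v \<Longrightarrow> z = w" for z
    using assms by (intro unitB_inj) simp_all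
qed (fact assms)

lemma the_unitB_simps:
  "(THE z. unitB z = Some (1, 2)) = Bc"
  "(THE z. unitB z = Some (2, 1)) = Bd"
  "(THE z. unitB z = Some (1, 1)) = Bcd"
  "(THE z. unitB z = Some (2, 2)) = Bdc"
  by (rule the_unitB_eq, simp del: One_nat_def)+

lemmas A21_B21_eval =
  the_repA_simps the_unitB_simps addAA_def multAA_def addA_def multA_def compT_def maxT_def appT_def
  addB_def multB_def doubleton_eq_iff

definition matrix_unit_pairs :: "(A21 \<times> A21) set" where
  "matrix_unit_pairs = {(A1, A1), (Aa, Ae), (Ae, Aa), (Aae, Aea), (Aea, Aae)}"

definition null_pairs :: "(A21 \<times> A21) set" where
  "null_pairs = {(Aa, A1), (A1, Aa), (Aa, Aa), (A0, A1), (A1, A0), (A0, Ae), (Ae, A0),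
     (Aa, Aea), (Aea, Aa), (Aa, Aae), (Aae, Aa), (A0, Aea), (Aea, A0), (A0, Aae), (Aae, A0),
     (Aa, A0), (A0, Aa), (A0, A0)}"

fun to_B21 :: "A21 \<times> A21 \<Rightarrow> B21" where
  "to_B21 (A1, A1) = B1"
| "to_B21 (Aa, Ae) = Bc"
| "to_B21 (Ae, Aa) = Bd"
| "to_B21 (Aae, Aea) = Bcd"
| "to_B21 (Aea, Aae) = Bdc"
| "to_B21 _ = B0"

lemma null_pairs_absorbing:
  assumes "p \<in> matrix_unit_pairs \<union> null_pairs" and "q \<in> matrix_unit_pairs \<union> null_pairs"
    and "p \<in> null_pairs \<or> q \<in> null_pairs"
  shows "addAA p q \<in> null_pairs \<and> multAA p q \<in> null_pairs"
  using assms unfolding null_pairs_def matrix_unit_pairs_def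
  by (elim insertE UnE emptyE; simp add: A21_B21_eval del: One_nat_def)

lemma matrix_unit_pairs_closed:
  assumes "p \<in> matrix_unit_pairs" and "q \<in> matrix_unit_pairs"
  shows "addAA p q \<in> matrix_unit_pairs \<union> null_pairs \<and> multAA p q \<in> matrix_unit_pairs \<union> null_pairs"
  using assms unfolding null_pairs_def matrix_unit_pairs_def
  by (elim insertE emptyE; simp add: A21_B21_eval del: One_nat_def)

lemma matrix_unit_pairs_Un_null_pairs_closed:
  assumes "p \<in> matrix_unit_pairs \<union> null_pairs" and "q \<in> matrix_unit_pairs \<union> null_pairs"
  shows "addAA p q \<in> matrix_unit_pairs \<union> null_pairs"
    and "multAA p q \<in> matrix_unit_pairs \<union> null_pairs"
  using null_pairs_absorbing[OF assms] matrix_unit_pairs_closed[of p q] assms by blast+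

lemma to_B21_null_pairs: "p \<in> null_pairs \<Longrightarrow> to_B21 p = B0"
  unfolding null_pairs_def by auto

lemma to_B21_hom_on_matrix_unit_pairs:
  assumes "p \<in> matrix_unit_pairs" and "q \<in> matrix_unit_pairs"
  shows "to_B21 (addAA p q) = addB (to_B21 p) (to_B21 q) \<and>
    to_B21 (multAA p q) = multB (to_B21 p) (to_B21 q)"
  using assms unfolding matrix_unit_pairs_def
  by (elim insertE emptyE; simp add: A21_B21_eval del: One_nat_def)

lemma B0_absorbing:
  "addB B0 b = B0" "addB b B0 = B0" "multB B0 b = B0" "multB b B0 = B0"
  by (cases b; simp add: addB_def multB_def doubleton_eq_iff)+

lemma to_B21_hom:
  assumes "p \<in> matrix_unit_pairs \<union> null_pairs" and "q \<in> matrix_unit_pairs \<union> null_pairs"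
  shows "to_B21 (addAA p q) = addB (to_B21 p) (to_B21 q)"
    and "to_B21 (multAA p q) = multB (to_B21 p) (to_B21 q)"
proof -
  show "to_B21 (addAA p q) = addB (to_B21 p) (to_B21 q)"
    by (rule hom_on_Un_absorbing[where f = addAA and g = addB and h = to_B21 and z = B0,
          OF conjunct1[OF null_pairs_absorbing] B0_absorbing(1,2) to_B21_null_pairs
          conjunct1[OF to_B21_hom_on_matrix_unit_pairs] assms])
  show "to_B21 (multAA p q) = multB (to_B21 p) (to_B21 q)"
    by (rule hom_on_Un_absorbing[where f = multAA and g = multB and h = to_B21 and z = B0,
          OF conjunct2[OF null_pairs_absorbing] B0_absorbing(3,4) to_B21_null_pairs
          conjunct2[OF to_B21_hom_on_matrix_unit_pairs] assms])
qed

lemma to_B21_surj: "to_B21 ` (matrix_unit_pairs \<union> null_pairs) = UNIV"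
proof -
  have "b \<in> to_B21 ` (matrix_unit_pairs \<union> null_pairs)" for b
    by (cases b) (force simp: matrix_unit_pairs_def null_pairs_def)+
  then show ?thesis by blast
qed

theorem proposition3p2:
  shows "\<exists>(S :: (A21 \<times> A21) set) (h :: A21 \<times> A21 \<Rightarrow> B21).
           S \<noteq> {} \<and>
           (\<forall>p\<in>S. \<forall>q\<in>S. addAA p q \<in> S \<and> multAA p q \<in> S) \<and>
           (\<forall>p\<in>S. \<forall>q\<in>S. h (addAA p q) = addB (h p) (h q)
                          \<and> h (multAA p q) = multB (h p) (h q)) \<and>
           h ` S = UNIV"
proof (intro exI[of _ "matrix_unit_pairs \<union> null_pairs"] exI[of _ to_B21] conjI ballI)
  show "matrix_unit_pairs \<union> null_pairs \<noteq> {}"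
    by (simp add: matrix_unit_pairs_def)
  show "to_B21 ` (matrix_unit_pairs \<union> null_pairs) = UNIV"
    by (fact to_B21_surj)
qed (rule matrix_unit_pairs_Un_null_pairs_closed to_B21_hom; assumption)+

end
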